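(* There is a universal constant $C$ such that the following holds. Let $R>0$, $K>1$, $\Omega:=B(0,R)\setminus B(0,R/K)\subset\mathbb{R}^2$, and let $f\in L^\infty(\mathbb{R}^2)$ with $\operatorname{supp} f\subset\Omega$. Then for all $x,y\in\Omega$ with $x\ne y$, $$|v_r[f](x)-v_r[f](y)|+|v_\alpha[f](x)-v_\alpha[f](y)|\le CK\|f\|_{L^\infty}|x-y|\Big(1+\log\frac{R}{|x-y|}\Big).$$
   Context: For a vorticity $f$, $v[f](x)=\frac{1}{2\pi}\int_{\mathbb{R}^2}\frac{(x-y)^\perp}{|x-y|^2}f(y)\,dy$ with $(x_1,x_2)^\perp=(-x_2,x_1)$. The radial and angular components of the velocity at $x\neq0$ are $v_r[f](x)=\hat x\cdot v[f](x)$ and $v_\alpha[f](x)=\hat x^\perp\cdot v[f](x)$, where $\hat x=x/|x|$. *)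

theory Defs
  imports "HOL-Analysis.Analysis" "HOL-Probability.Essential_Supremum"
begin

text \<open>The plane R^2 is modelled by the type complex (a 2-dimensional real
inner product space with Lebesgue measure lborel). The perpendicular
(x1,x2)^perp = (-x2,x1) is multiplication by the imaginary unit.\<close>

definition perp :: "complex \<Rightarrow> complex" where
  "perp z = \<i> * z"

definition velocity :: "(complex \<Rightarrow> real) \<Rightarrow> complex \<Rightarrow> complex" where
  "velocity f x = (1 / (2 * pi)) *\<^sub>R
     (\<integral> y. (f y / (cmod (x - y))\<^sup>2) *\<^sub>R perp (x - y) \<partial>lborel)"

definition v_r :: "(complex \<Rightarrow> real) \<Rightarrow> complex \<Rightarrow> real" where
  "v_r f x = inner (x /\<^sub>R norm x) (velocity f x)"

definition v_alpha :: "(complex \<Rightarrow> real) \<Rightarrow> complex \<Rightarrow> real" where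
  "v_alpha f x = inner (perp (x /\<^sub>R norm x)) (velocity f x)"

definition Linfty :: "(complex \<Rightarrow> real) set" where
  "Linfty = {f. f \<in> borel_measurable lborel \<and>
                 esssup lborel (\<lambda>y. ereal \<bar>f y\<bar>) < \<infinity>}"

definition Linfty_norm :: "(complex \<Rightarrow> real) \<Rightarrow> real" where
  "Linfty_norm f = real_of_ereal (esssup lborel (\<lambda>y. ereal \<bar>f y\<bar>))"

end

theory Submission
  imports Defs
begin

text \<open>
  With the kernel \<open>K w = perp w / |w|\<^sup>2 = \<i> / cnj w\<close> the velocity is \<open>(2 pi)\<^sup>-\<^sup>1 (K * f)\<close>, and
  \<open>|K w| = 1 / |w|\<close>. For \<open>|f| \<le> M\<close> supported in \<open>B(0, R)\<close> this gives \<open>|v| \<le> 4 M R\<close>.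
  For \<open>d = |x - y|\<close>, the difference \<open>K(x - z) - K(y - z)\<close> is integrated separately near
  the two singularities, contributing \<open>O(d)\<close>, and on \<open>2d < |x - z| < 2R\<close>, where it is
  at most \<open>2d / |x - z|\<^sup>2\<close>; summing over dyadic shells the latter contributes
  \<open>O(d log (R / d))\<close>. The polar components additionally see the variation of the frame
  \<open>x / |x|\<close>, which is Lipschitz with constant \<open>2 / |x| \<le> 2K / R\<close> on the annulus; against
  \<open>|v| \<le> 4 M R\<close> this costs \<open>8 K M d\<close>, the source of the factor \<open>K\<close>.
\<close>

lemma exists_pow2_bracket:
  fixes s :: real assumes "s \<ge> 1"
  shows "\<exists>k::nat. 2 ^ k \<le> s \<and> s < 2 ^ (k + 1)"
proof -
  have "\<lfloor>log 2 s\<rfloor> \<ge> 0" using assms by simp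
  then obtain k :: nat where k: "\<lfloor>log 2 s\<rfloor> = int k" using nonneg_int_cases by blast
  then have "2 powr real k \<le> s \<and> s < 2 powr (real k + 1)"
    using assms floor_log_eq_powr_iff[of s 2 "int k"] by simp
  then show ?thesis by (auto simp: powr_realpow[symmetric] powr_add)
qed

lemma one_plus_ln_ge_quarter:
  fixes t :: real assumes "t > 1 / 2"
  shows "1 + ln t \<ge> 1 / 4"
proof -
  have "ln (1 / 2) < ln t" using assms by simp
  then show ?thesis using ln2_le_25_over_36 by (simp add: ln_div)
qed

lemma exists_pow2_ge_ln_bound:
  fixes t :: real assumes t: "t > 1 / 2"
  shows "\<exists>N::nat. t \<le> 2 ^ N \<and> real N \<le> 2 * (1 + ln t)"
proof (cases "t \<le> 1")
  case True
  then show ?thesis using one_plus_ln_ge_quarter[OF t] by (intro exI[of _ 0]) auto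
next
  case False
  define N where "N = nat \<lceil>log 2 t\<rceil>"
  have "log 2 t > 0" using False by simp
  then have N: "log 2 t \<le> real N" "real N \<le> log 2 t + 1"
    unfolding N_def by linarith+
  have "t = 2 powr log 2 t" using t by simp
  also have "\<dots> \<le> 2 ^ N" using N(1) by (simp add: powr_realpow[symmetric])
  finally have "t \<le> 2 ^ N" .
  moreover have "log 2 t \<le> 3 / 2 * ln t"
    using ln2_ge_two_thirds \<open>log 2 t > 0\<close> by (simp add: log_def field_simps)
  ultimately show ?thesis using N(2) False by (intro exI[of _ N]) auto
qed

lemma ball_in_borel [measurable]: "ball c r \<in> sets borel"
  and cball_in_borel [measurable]: "cball c r \<in> sets borel"
  by (simp_all add: borel_open borel_closed)

lemma emeasure_lborel_ball_complex:
  fixes c :: complex assumes "r \<ge> 0"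
  shows "emeasure lborel (ball c r) = ennreal (pi * r\<^sup>2)"
  using emeasure_ball[OF assms, of c] by (simp add: unit_ball_vol_2)

lemma emeasure_lborel_cball_complex:
  fixes c :: complex assumes "r \<ge> 0"
  shows "emeasure lborel (cball c r) = ennreal (pi * r\<^sup>2)"
  using emeasure_cball[OF assms, of c] by (simp add: unit_ball_vol_2)

lemma nn_integral_inverse_dist_ball_le:
  fixes c :: complex assumes r: "r > 0"
  shows "(\<integral>\<^sup>+z. ennreal (indicator (ball c r) z / cmod (c - z)) \<partial>lborel)
    \<le> ennreal (4 * pi * r)"
proof -
  define g where "g k z = ennreal (2 ^ (k + 1) / r) * indicator (cball c (r / 2 ^ k)) z"
    for k :: nat and z :: complex
  have majorant: "ennreal (indicator (ball c r) z / cmod (c - z)) \<le> (\<Sum>k. g k z)" for z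
  proof (cases "z \<in> ball c r \<and> z \<noteq> c")
    case True
    define t where "t = cmod (c - z)"
    have t: "0 < t" "t < r" using True by (auto simp: t_def dist_norm)
    then obtain k :: nat where k: "2 ^ k \<le> r / t" "r / t < 2 ^ (k + 1)"
      using exists_pow2_bracket[of "r / t"] by auto
    have "z \<in> cball c (r / 2 ^ k)" "1 / t \<le> 2 ^ (k + 1) / r"
      using k t by (simp_all add: dist_norm t_def field_simps)
    then have "ennreal (indicator (ball c r) z / cmod (c - z)) \<le> g k z"
      using True by (simp add: g_def t_def indicator_def ennreal_leI)
    also have "\<dots> \<le> (\<Sum>k. g k z)"
      using sum_le_suminf[of "\<lambda>k. g k z" "{k}"] by (auto intro: summableI)
    finally show ?thesis .
  qed (auto simp: indicator_def)
  have "(\<integral>\<^sup>+z. ennreal (indicator (ball c r) z / cmod (c - z)) \<partial>lborel)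
      \<le> (\<integral>\<^sup>+z. (\<Sum>k. g k z) \<partial>lborel)"
    by (intro nn_integral_mono majorant)
  also have "\<dots> = (\<Sum>k. integral\<^sup>N lborel (g k))"
    unfolding g_def by (rule nn_integral_suminf) measurable
  also have "\<dots> = (\<Sum>k. ennreal (2 * pi * r * (1 / 2) ^ k))"
  proof (rule suminf_cong)
    fix k :: nat
    have "2 ^ (k + 1) / r * (pi * (r / 2 ^ k)\<^sup>2) = 2 * pi * r * (1 / 2) ^ k"
      using r by (simp add: field_simps power2_eq_square power_divide)
    then show "integral\<^sup>N lborel (g k) = ennreal (2 * pi * r * (1 / 2) ^ k)"
      using r unfolding g_def
      by (simp add: nn_integral_cmult_indicator emeasure_lborel_cball_complex ennreal_mult[symmetric])
  qed
  also have "\<dots> = ennreal (\<Sum>k. 2 * pi * r * (1 / 2) ^ k)"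
    using r by (intro suminf_ennreal2) (auto intro: summable_mult summable_geometric)
  also have "(\<Sum>k. 2 * pi * r * (1 / 2 :: real) ^ k) = 4 * pi * r"
    by (subst suminf_mult) (auto simp: suminf_geometric summable_geometric)
  finally show ?thesis .
qed

lemma nn_integral_inverse_dist_sq_annulus_le:
  fixes c :: complex assumes a: "a > 0" and b: "b \<le> a * 2 ^ N"
  shows "(\<integral>\<^sup>+z. ennreal (indicator (ball c b - ball c a) z / (cmod (c - z))\<^sup>2) \<partial>lborel)
    \<le> ennreal (4 * pi * N)"
proof -
  define g where "g k z = ennreal (1 / (a * 2 ^ k)\<^sup>2) * indicator (ball c (a * 2 ^ (k + 1))) z"
    for k :: nat and z :: complex
  have majorant: "ennreal (indicator (ball c b - ball c a) z / (cmod (c - z))\<^sup>2) \<le> (\<Sum>k<N. g k z)"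
    for z
  proof (cases "z \<in> ball c b - ball c a")
    case True
    define t where "t = cmod (c - z)"
    have t: "a \<le> t" "t < b" using True by (auto simp: t_def dist_norm)
    then obtain k :: nat where k: "2 ^ k \<le> t / a" "t / a < 2 ^ (k + 1)"
      using a exists_pow2_bracket[of "t / a"] by auto
    have zin: "z \<in> ball c (a * 2 ^ (k + 1))" and ak: "a * 2 ^ k \<le> t"
      using k a by (simp_all add: dist_norm t_def field_simps)
    have "t / a < 2 ^ N" using t a b by (simp add: field_simps)
    then have "(2 :: real) ^ k < 2 ^ N" using k(1) by linarith
    then have "k < N" by (rule power_less_imp_less_exp[rotated]) simp
    have "1 / t\<^sup>2 \<le> 1 / (a * 2 ^ k)\<^sup>2"
      using ak a t(1) by (intro divide_left_mono power_mono mult_pos_pos zero_less_power) auto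
    then have "ennreal (indicator (ball c b - ball c a) z / (cmod (c - z))\<^sup>2) \<le> g k z"
      using True zin by (simp add: g_def t_def indicator_def ennreal_leI)
    also have "\<dots> \<le> (\<Sum>k<N. g k z)" using \<open>k < N\<close> by (intro member_le_sum) auto
    finally show ?thesis .
  qed (auto simp: indicator_def)
  have "(\<integral>\<^sup>+z. ennreal (indicator (ball c b - ball c a) z / (cmod (c - z))\<^sup>2) \<partial>lborel)
      \<le> (\<integral>\<^sup>+z. (\<Sum>k<N. g k z) \<partial>lborel)"
    by (intro nn_integral_mono majorant)
  also have "\<dots> = (\<Sum>k<N. integral\<^sup>N lborel (g k))"
    unfolding g_def by (rule nn_integral_sum) measurable
  also have "\<dots> = (\<Sum>k<N. ennreal (4 * pi))"
  proof (rule sum.cong)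
    fix k :: nat
    have "1 / (a * 2 ^ k)\<^sup>2 * (pi * (a * 2 ^ (k + 1))\<^sup>2) = 4 * pi"
      using a by (simp add: field_simps power2_eq_square)
    then show "integral\<^sup>N lborel (g k) = ennreal (4 * pi)"
      using a unfolding g_def
      by (simp add: nn_integral_cmult_indicator emeasure_lborel_ball_complex ennreal_mult[symmetric])
  qed simp
  also have "\<dots> = ennreal (4 * pi * N)"
    by (simp add: ennreal_of_nat_eq_real_of_nat[symmetric] ennreal_mult' mult.commute)
  finally show ?thesis .
qed

lemma integrable_norm_integral_le_majorant:
  fixes g :: "'a \<Rightarrow> 'b::{banach, second_countable_topology}"
  assumes g: "g \<in> borel_measurable M" and G: "G \<in> borel_measurable M"
    and le: "AE z in M. norm (g z) \<le> c * G z" and c: "c \<ge> 0"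
    and B: "(\<integral>\<^sup>+z. G z \<partial>M) \<le> ennreal B" and "B \<ge> 0"
  shows "integrable M g" and "norm (integral\<^sup>L M g) \<le> c * B"
proof -
  have "(\<integral>\<^sup>+z. norm (g z) \<partial>M) \<le> (\<integral>\<^sup>+z. ennreal c * ennreal (G z) \<partial>M)"
    using le
    by (intro nn_integral_mono_AE) (auto simp: ennreal_mult'[OF c, symmetric] intro: ennreal_leI)
  also have "\<dots> = ennreal c * (\<integral>\<^sup>+z. G z \<partial>M)"
    using G by (intro nn_integral_cmult) simp
  also have "\<dots> \<le> ennreal (c * B)"
    using B c by (simp add: ennreal_mult' mult_left_mono)
  finally have nn: "(\<integral>\<^sup>+z. norm (g z) \<partial>M) \<le> ennreal (c * B)" .
  then show int: "integrable M g"
    using g by (intro integrableI_bounded) (auto simp: order_le_less_trans)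
  show "norm (integral\<^sup>L M g) \<le> c * B"
    using order.trans[OF integral_norm_bound_ennreal[OF int] nn] c \<open>B \<ge> 0\<close>
    by (simp add: ennreal_le_iff)
qed

lemma Linfty_AE_abs_le:
  assumes "f \<in> Linfty" shows "AE z in lborel. \<bar>f z\<bar> \<le> Linfty_norm f"
proof -
  have fin: "esssup lborel (\<lambda>y. ereal \<bar>f y\<bar>) < \<infinity>" using assms by (simp add: Linfty_def)
  show ?thesis using esssup_AE[of "\<lambda>y. ereal \<bar>f y\<bar>" lborel]
  proof eventually_elim
    case (elim z)
    then show ?case using fin
      by (cases "esssup lborel (\<lambda>y. ereal \<bar>f y\<bar>)") (auto simp: Linfty_norm_def)
  qed
qed

lemma Linfty_norm_nonneg:
  assumes "f \<in> Linfty" shows "Linfty_norm f \<ge> 0"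
proof -
  have "AE z :: complex in lborel. 0 \<le> Linfty_norm f"
    using Linfty_AE_abs_le[OF assms] by (rule eventually_mono) (rule order.trans[OF abs_ge_zero])
  moreover have "ae_filter (lborel :: complex measure) \<noteq> bot"
    by (simp add: ae_filter_eq_bot_iff)
  ultimately show ?thesis using eventually_const by blast
qed

definition bs_kernel :: "complex \<Rightarrow> complex" where
  "bs_kernel w = (1 / (cmod w)\<^sup>2) *\<^sub>R perp w"

lemma velocity_eq_bs_kernel:
  "velocity f x = (1 / (2 * pi)) *\<^sub>R (\<integral>z. f z *\<^sub>R bs_kernel (x - z) \<partial>lborel)"
  by (simp add: velocity_def bs_kernel_def)

lemma bs_kernel_eq: "bs_kernel w = \<i> * inverse (cnj w)"
proof (cases "w = 0")
  case False
  then have "inverse (cnj w) = w / complex_of_real ((cmod w)\<^sup>2)"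
    using complex_div_cnj[of 1 "cnj w"] by (simp add: inverse_eq_divide)
  then show ?thesis using False by (simp add: bs_kernel_def perp_def scaleR_conv_of_real field_simps)
qed (simp add: bs_kernel_def perp_def)

lemma norm_bs_kernel: "norm (bs_kernel w) = 1 / cmod w"
  by (simp add: bs_kernel_eq norm_mult norm_inverse norm_divide complex_mod_cnj inverse_eq_divide)

lemma norm_bs_kernel_diff:
  assumes "a \<noteq> 0" "b \<noteq> 0"
  shows "norm (bs_kernel a - bs_kernel b) = cmod (a - b) / (cmod a * cmod b)"
proof -
  have "bs_kernel a - bs_kernel b = \<i> * cnj (b - a) / (cnj a * cnj b)"
    using assms by (simp add: bs_kernel_eq field_simps)
  then show ?thesis
    by (simp add: norm_mult norm_divide norm_minus_commute complex_mod_cnj flip: complex_cnj_diff)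
qed

text \<open>
  Where \<open>|x - z| < 2 |x - y|\<close>, hence \<open>|y - z| < 3 |x - y|\<close>, the two kernels are bounded
  separately; elsewhere \<open>|y - z| \<ge> |x - z| / 2\<close> and \<open>|K a - K b| = |a - b| / (|a| |b|)\<close> give
  the last term.
\<close>
definition bs_kernel_diff_majorant :: "real \<Rightarrow> complex \<Rightarrow> complex \<Rightarrow> complex \<Rightarrow> real" where
  "bs_kernel_diff_majorant R x y z =
     indicator (ball x (2 * cmod (x - y))) z / cmod (x - z)
     + indicator (ball y (3 * cmod (x - y))) z / cmod (y - z)
     + 2 * cmod (x - y) * (indicator (ball x (2 * R) - ball x (2 * cmod (x - y))) z / (cmod (x - z))\<^sup>2)"

lemma bs_kernel_diff_majorant_nonneg: "bs_kernel_diff_majorant R x y z \<ge> 0"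
  by (simp add: bs_kernel_diff_majorant_def)

lemma norm_bs_kernel_diff_le:
  assumes "x \<noteq> y" "cmod x < R" "cmod z < R"
  shows "norm (bs_kernel (x - z) - bs_kernel (y - z)) \<le> bs_kernel_diff_majorant R x y z"
proof -
  define d where "d = cmod (x - y)"
  have d: "d > 0" using assms(1) by (simp add: d_def)
  show ?thesis
  proof (cases "cmod (x - z) < 2 * d")
    case True
    have "cmod (y - z) \<le> cmod (y - x) + cmod (x - z)"
      using norm_triangle_ineq[of "y - x" "x - z"] by simp
    then have "z \<in> ball x (2 * d)" "z \<in> ball y (3 * d)"
      using True by (auto simp: dist_norm d_def norm_minus_commute)
    then have "norm (bs_kernel (x - z)) + norm (bs_kernel (y - z)) \<le> bs_kernel_diff_majorant R x y z"
      by (simp add: bs_kernel_diff_majorant_def norm_bs_kernel d_def[symmetric])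
    then show ?thesis using norm_triangle_ineq4 order.trans by blast
  next
    case False
    define t where "t = cmod (x - z)"
    have t: "2 * d \<le> t" "t > 0" using False d unfolding t_def by linarith+
    have "t \<le> cmod x + cmod z" unfolding t_def by (rule norm_triangle_ineq4)
    then have "z \<in> ball x (2 * R) - ball x (2 * d)"
      using assms t by (auto simp: dist_norm t_def)
    then have majorant: "bs_kernel_diff_majorant R x y z \<ge> 2 * d / t\<^sup>2"
      by (simp add: bs_kernel_diff_majorant_def d_def[symmetric] t_def[symmetric] indicator_def)
    have "t - d \<le> cmod (y - z)"
      using norm_triangle_ineq[of "x - y" "y - z"] by (simp add: d_def t_def)
    then have yz: "t / 2 \<le> cmod (y - z)" using t by simp
    then have "x - z \<noteq> 0" "y - z \<noteq> 0" using t by (auto simp: t_def)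
    then have "norm (bs_kernel (x - z) - bs_kernel (y - z)) = d / (t * cmod (y - z))"
      by (simp add: norm_bs_kernel_diff d_def t_def)
    also have "\<dots> \<le> d / (t * (t / 2))"
      using t yz d by (intro divide_left_mono mult_left_mono mult_pos_pos) auto
    also have "\<dots> = 2 * d / t\<^sup>2" by (simp add: power2_eq_square)
    finally show ?thesis using majorant by linarith
  qed
qed

lemma nn_integral_bs_kernel_diff_majorant_le:
  assumes "x \<noteq> y" and N: "R \<le> cmod (x - y) * 2 ^ N"
  shows "(\<integral>\<^sup>+z. bs_kernel_diff_majorant R x y z \<partial>lborel)
    \<le> ennreal (4 * pi * cmod (x - y) * (5 + 2 * N))"
proof -
  define d where "d = cmod (x - y)"
  have d: "d > 0" using assms(1) by (simp add: d_def)
  define A where "A z = indicator (ball x (2 * d)) z / cmod (x - z)" for z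
  define B where "B z = indicator (ball y (3 * d)) z / cmod (y - z)" for z
  define C where "C z = indicator (ball x (2 * R) - ball x (2 * d)) z / (cmod (x - z))\<^sup>2" for z
  have "(\<integral>\<^sup>+z. bs_kernel_diff_majorant R x y z \<partial>lborel)
      = (\<integral>\<^sup>+z. ennreal (A z) + ennreal (B z) + ennreal (2 * d) * ennreal (C z) \<partial>lborel)"
    using d by (intro nn_integral_cong)
      (simp add: bs_kernel_diff_majorant_def A_def B_def C_def d_def[symmetric] ennreal_plus
        flip: ennreal_mult')
  also have "\<dots> = (\<integral>\<^sup>+z. A z \<partial>lborel) + (\<integral>\<^sup>+z. B z \<partial>lborel)
      + ennreal (2 * d) * (\<integral>\<^sup>+z. C z \<partial>lborel)"
    unfolding A_def B_def C_def by (simp add: nn_integral_add nn_integral_cmult)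
  also have "\<dots> \<le> ennreal (4 * pi * (2 * d)) + ennreal (4 * pi * (3 * d))
      + ennreal (2 * d) * ennreal (4 * pi * N)"
    unfolding A_def B_def C_def using d N
    by (intro add_mono mult_left_mono nn_integral_inverse_dist_ball_le
        nn_integral_inverse_dist_sq_annulus_le) (auto simp: d_def)
  also have "\<dots> = ennreal (4 * pi * d * (5 + 2 * N))"
    using d
    by (simp add: ennreal_mult'[symmetric] ennreal_plus[symmetric] algebra_simps del: ennreal_plus)
  finally show ?thesis by (simp add: d_def)
qed

lemma abs_inner_diff_le:
  fixes a b v w :: "'a::real_inner" assumes "norm a = 1"
  shows "\<bar>inner a v - inner b w\<bar> \<le> norm (v - w) + norm (a - b) * norm w"
proof -
  have "inner a v - inner b w = inner a (v - w) + inner (a - b) w"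
    by (simp add: inner_diff_right inner_diff_left)
  also have "\<bar>\<dots>\<bar> \<le> norm a * norm (v - w) + norm (a - b) * norm w"
    by (intro order.trans[OF abs_triangle_ineq] add_mono Cauchy_Schwarz_ineq2)
  finally show ?thesis using assms by simp
qed

lemma norm_sgn_diff_le:
  fixes x y :: "'a::real_normed_vector" assumes "x \<noteq> 0" "y \<noteq> 0"
  shows "norm (sgn x - sgn y) \<le> 2 * norm (x - y) / norm x"
proof -
  have "sgn x - sgn y = (x - y) /\<^sub>R norm x + ((norm y - norm x) / norm x) *\<^sub>R sgn y"
  proof -
    have "((norm y - norm x) / norm x) *\<^sub>R sgn y = y /\<^sub>R norm x - sgn y"
      using assms by (simp add: sgn_div_norm scaleR_diff_left[symmetric] field_simps)
    then show ?thesis by (simp add: sgn_div_norm scaleR_diff_right)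
  qed
  also have "norm \<dots> \<le> norm (x - y) / norm x + \<bar>norm y - norm x\<bar> / norm x"
    using assms by (intro order.trans[OF norm_triangle_ineq])
      (simp add: norm_sgn divide_inverse_commute abs_mult)
  also have "\<bar>norm y - norm x\<bar> \<le> norm (x - y)"
    by (metis norm_minus_commute norm_triangle_ineq3)
  finally show ?thesis by (simp add: divide_right_mono add_divide_distrib[symmetric])
qed

lemma polar_velocity_diff_le:
  assumes "x \<noteq> 0" "y \<noteq> 0"
  shows "\<bar>v_r f x - v_r f y\<bar> + \<bar>v_alpha f x - v_alpha f y\<bar>
    \<le> 2 * (norm (velocity f x - velocity f y) + norm (sgn x - sgn y) * norm (velocity f y))"
proof -
  have "norm (perp (sgn x)) = 1" "norm (sgn x) = 1"
    using assms by (simp_all add: perp_def norm_mult norm_sgn)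
  moreover have "perp (sgn x) - perp (sgn y) = perp (sgn x - sgn y)" by (simp add: perp_def algebra_simps)
  ultimately show ?thesis
    using abs_inner_diff_le[of "sgn x" "velocity f x" "sgn y" "velocity f y"]
      abs_inner_diff_le[of "perp (sgn x)" "velocity f x" "perp (sgn y)" "velocity f y"]
    by (simp add: v_r_def v_alpha_def sgn_div_norm perp_def norm_mult)
qed

context
  fixes f :: "complex \<Rightarrow> real" and M R :: real
  assumes f: "f \<in> borel_measurable lborel" and M: "M \<ge> 0"
    and f_le: "AE z in lborel. \<bar>f z\<bar> \<le> M * indicator (ball 0 R) z"
begin

lemma integrable_velocity_integrand:
  assumes "cmod p < R"
  shows "integrable lborel (\<lambda>z. f z *\<^sub>R bs_kernel (p - z))"
    and norm_velocity_le: "norm (velocity f p) \<le> 4 * M * R"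
proof -
  have R: "R > 0" using assms norm_ge_zero[of p] by linarith
  have "AE z in lborel.
      norm (f z *\<^sub>R bs_kernel (p - z)) \<le> M * (indicator (ball p (2 * R)) z / cmod (p - z))"
    using f_le
  proof eventually_elim
    case (elim z)
    have "cmod (p - z) \<le> cmod p + cmod z" by (rule norm_triangle_ineq4)
    then have "z \<in> ball 0 R \<Longrightarrow> z \<in> ball p (2 * R)" using assms by (auto simp: dist_norm)
    then show ?case using elim M
      by (cases "z \<in> ball 0 R") (auto simp: norm_bs_kernel divide_right_mono)
  qed
  note bound = integrable_norm_integral_le_majorant[OF _ _ this M
      nn_integral_inverse_dist_ball_le[of "2 * R" p]]
  show "integrable lborel (\<lambda>z. f z *\<^sub>R bs_kernel (p - z))"
    using bound(1) f R by (simp add: bs_kernel_def perp_def)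
  have "norm (\<integral>z. f z *\<^sub>R bs_kernel (p - z) \<partial>lborel) \<le> M * (4 * pi * (2 * R))"
    using bound(2) f R by (simp add: bs_kernel_def perp_def)
  then show "norm (velocity f p) \<le> 4 * M * R"
    by (simp add: velocity_eq_bs_kernel field_simps)
qed

lemma norm_velocity_diff_le:
  assumes x: "cmod x < R" and y: "cmod y < R" and "x \<noteq> y" and N: "R \<le> cmod (x - y) * 2 ^ N"
  shows "norm (velocity f x - velocity f y) \<le> M * cmod (x - y) * (10 + 4 * N)"
proof -
  let ?g = "\<lambda>z. f z *\<^sub>R (bs_kernel (x - z) - bs_kernel (y - z))"
  have g_le: "AE z in lborel. norm (?g z) \<le> M * bs_kernel_diff_majorant R x y z"
    using f_le
  proof eventually_elim
    case (elim z)
    show ?case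
    proof (cases "z \<in> ball 0 R")
      case True
      then show ?thesis
        using elim norm_bs_kernel_diff_le[OF \<open>x \<noteq> y\<close> x, of z]
        by (auto intro: mult_mono)
    qed (use elim M bs_kernel_diff_majorant_nonneg in auto)
  qed
  have meas: "?g \<in> borel_measurable lborel"
    "(\<lambda>z. bs_kernel_diff_majorant R x y z) \<in> borel_measurable lborel"
    using f by (simp_all add: bs_kernel_def perp_def bs_kernel_diff_majorant_def)
  have "norm (\<integral>z. ?g z \<partial>lborel) \<le> M * (4 * pi * cmod (x - y) * (5 + 2 * N))"
    by (rule integrable_norm_integral_le_majorant(2)[OF meas g_le M
          nn_integral_bs_kernel_diff_majorant_le[OF \<open>x \<noteq> y\<close> N]]) simp
  moreover have "velocity f x - velocity f y = (1 / (2 * pi)) *\<^sub>R (\<integral>z. ?g z \<partial>lborel)"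
    using integrable_velocity_integrand[OF x] integrable_velocity_integrand[OF y]
    by (simp add: velocity_eq_bs_kernel scaleR_diff_right)
  ultimately show ?thesis by (simp add: field_simps)
qed

lemma norm_velocity_diff_le_log:
  assumes x: "cmod x < R" and y: "cmod y < R" and "x \<noteq> y"
  shows "norm (velocity f x - velocity f y)
    \<le> M * cmod (x - y) * (10 + 8 * (1 + ln (R / cmod (x - y))))"
proof -
  define d where "d = cmod (x - y)"
  have d: "d > 0" "d < 2 * R"
    using \<open>x \<noteq> y\<close> x y norm_triangle_ineq4[of x y] by (auto simp: d_def)
  then obtain N :: nat where N: "R / d \<le> 2 ^ N" "real N \<le> 2 * (1 + ln (R / d))"
    using exists_pow2_ge_ln_bound[of "R / d"] by (auto simp: field_simps)
  have "norm (velocity f x - velocity f y) \<le> M * d * (10 + 4 * N)"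
    unfolding d_def using N(1) d
    by (intro norm_velocity_diff_le x y \<open>x \<noteq> y\<close>) (simp add: d_def field_simps)
  also have "\<dots> \<le> M * d * (10 + 8 * (1 + ln (R / d)))"
    using N(2) M d by (intro mult_left_mono) auto
  finally show ?thesis by (simp add: d_def)
qed

lemma polar_velocity_diff_le_annulus:
  assumes x: "R / K \<le> cmod x" "cmod x < R" and y: "R / K \<le> cmod y" "cmod y < R"
    and "x \<noteq> y" and "K > 0"
  shows "\<bar>v_r f x - v_r f y\<bar> + \<bar>v_alpha f x - v_alpha f y\<bar>
    \<le> 2 * M * cmod (x - y) * (10 + 8 * (1 + ln (R / cmod (x - y))) + 8 * K)"
proof -
  define d where "d = cmod (x - y)"
  have R: "R > 0" using x norm_ge_zero[of x] by linarith
  then have RK: "R / K > 0" using \<open>K > 0\<close> by simp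
  then have xy0: "x \<noteq> 0" "y \<noteq> 0" using x y by auto
  have "norm (sgn x - sgn y) \<le> 2 * d / cmod x"
    using norm_sgn_diff_le[OF xy0] by (simp add: d_def)
  also have "\<dots> \<le> 2 * d / (R / K)"
    using x RK by (intro divide_left_mono mult_pos_pos) (auto simp: d_def)
  finally have sgn_le: "norm (sgn x - sgn y) \<le> 2 * d * K / R" by simp
  have "\<bar>v_r f x - v_r f y\<bar> + \<bar>v_alpha f x - v_alpha f y\<bar>
      \<le> 2 * (norm (velocity f x - velocity f y) + norm (sgn x - sgn y) * norm (velocity f y))"
    by (rule polar_velocity_diff_le[OF xy0])
  also have "\<dots> \<le> 2 * (M * d * (10 + 8 * (1 + ln (R / d))) + 2 * d * K / R * (4 * M * R))"
    using norm_velocity_diff_le_log[OF x(2) y(2) \<open>x \<noteq> y\<close>] sgn_le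
      norm_velocity_le[OF y(2)] \<open>K > 0\<close> R
    by (intro mult_left_mono add_mono mult_mono) (auto simp: d_def)
  also have "\<dots> = 2 * M * d * (10 + 8 * (1 + ln (R / d)) + 8 * K)"
    using R by (simp add: field_simps)
  finally show ?thesis by (simp add: d_def)
qed

end

theorem corollary3p2:
  shows "\<exists>C::real. \<forall>(R::real) (K::real) (f::complex \<Rightarrow> real) x y.
    R > 0 \<longrightarrow> K > 1 \<longrightarrow> f \<in> Linfty \<longrightarrow>
    (AE z in lborel. z \<notin> ball 0 R - ball 0 (R / K) \<longrightarrow> f z = 0) \<longrightarrow>
    x \<in> ball 0 R - ball 0 (R / K) \<longrightarrow> y \<in> ball 0 R - ball 0 (R / K) \<longrightarrow> x \<noteq> y \<longrightarrow>
    \<bar>v_r f x - v_r f y\<bar> + \<bar>v_alpha f x - v_alpha f y\<bar>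
      \<le> C * K * Linfty_norm f * cmod (x - y) * (1 + ln (R / cmod (x - y)))"
proof (intro exI[of _ 160] allI impI)
  fix R K :: real and f :: "complex \<Rightarrow> real" and x y :: complex
  assume K: "K > 1" and f: "f \<in> Linfty"
    and supp: "AE z in lborel. z \<notin> ball 0 R - ball 0 (R / K) \<longrightarrow> f z = 0"
    and "x \<in> ball 0 R - ball 0 (R / K)" "y \<in> ball 0 R - ball 0 (R / K)" and "x \<noteq> y"
  then have x: "R / K \<le> cmod x" "cmod x < R" and y: "R / K \<le> cmod y" "cmod y < R" by auto
  define M d L where "M = Linfty_norm f" and "d = cmod (x - y)" and "L = 1 + ln (R / d)"
  have M: "M \<ge> 0" using Linfty_norm_nonneg[OF f] by (simp add: M_def)
  have fm: "f \<in> borel_measurable lborel" using f by (simp add: Linfty_def)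
  have f_le: "AE z in lborel. \<bar>f z\<bar> \<le> M * indicator (ball 0 R) z"
    using Linfty_AE_abs_le[OF f] supp by eventually_elim (auto simp: M_def)
  have d: "d > 0" "d < 2 * R" using \<open>x \<noteq> y\<close> x y norm_triangle_ineq4[of x y] by (auto simp: d_def)
  have L: "L \<ge> 1 / 4" using d unfolding L_def by (intro one_plus_ln_ge_quarter) (simp add: field_simps)
  have "\<bar>v_r f x - v_r f y\<bar> + \<bar>v_alpha f x - v_alpha f y\<bar> \<le> 2 * M * d * (10 + 8 * L + 8 * K)"
    using polar_velocity_diff_le_annulus[OF fm M f_le x y \<open>x \<noteq> y\<close>] K by (simp add: d_def L_def)
  also have "\<dots> \<le> 2 * M * d * (80 * K * L)"
  proof (intro mult_left_mono)
    have "1 * (1 / 4) \<le> K * L" "1 * L \<le> K * L" "K * (1 / 4) \<le> K * L"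
      using K L by (intro mult_mono mult_right_mono mult_left_mono; simp)+
    then show "10 + 8 * L + 8 * K \<le> 80 * K * L" by simp
  qed (use M d in simp)
  also have "\<dots> = 160 * K * M * d * L" by simp
  finally show "\<bar>v_r f x - v_r f y\<bar> + \<bar>v_alpha f x - v_alpha f y\<bar>
      \<le> 160 * K * Linfty_norm f * cmod (x - y) * (1 + ln (R / cmod (x - y)))"
    by (simp only: M_def d_def L_def)
qed

end
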